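(* Let $B_w$ be the weighted backward shift on $\ell^2$ with weights $w_n=\sqrt{(n+1)/n}$, $n\ge1$. Then $B_w$ is $2$-frequently hypercyclic on $\ell^2$ and is not frequently hypercyclic; consequently $B_w$ is $q$-frequently hypercyclic for every $q\ge2$.
   Context: The weighted backward shift is $B_w(e_n)=w_ne_{n-1}$ for $n\ge1$, $e_0=0$. An operator $T$ on a separable topological vector space $X$ is $q$-frequently hypercyclic ($q\in\mathbb{N}$) if there is $x\in X$ such that for every nonempty open $U$ the set $\{n\in\mathbb{N}:T^nx\in U\}$ has positive $q$-lower density, where $q\text{-}\underline{\mathrm{dens}}(A)=\liminf_{N\to\infty}\frac{\mathrm{card}\{n\in A:n\le N^q\}}{N}$. Frequently hypercyclic means $1$-frequently hypercyclic (i.e. positive lower density $\liminf_N \mathrm{card}\{n\in A:n\le N\}/N>0$). *)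

theory Defs
  imports "HOL-Analysis.Analysis"
begin

text \<open>The sequence space l2 (real scalars), realised concretely as square-summable
  sequences indexed by nat (index 0 corresponds to e_0).\<close>
definition l2 :: "(nat \<Rightarrow> real) set" where
  "l2 = {x. summable (\<lambda>n. (x n)\<^sup>2)}"

definition l2_norm :: "(nat \<Rightarrow> real) \<Rightarrow> real" where
  "l2_norm x = sqrt (\<Sum>n. (x n)\<^sup>2)"

definition l2_open :: "(nat \<Rightarrow> real) set \<Rightarrow> bool" where
  "l2_open U \<longleftrightarrow> U \<subseteq> l2 \<and>
     (\<forall>y\<in>U. \<exists>e>0. \<forall>z\<in>l2. l2_norm (z - y) < e \<longrightarrow> z \<in> U)"

text \<open>Weighted backward shift: B_w(e_n) = w_n e_(n-1) for n \<ge> 1, B_w(e_0) = 0,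
  i.e. (B_w x)_k = w_(k+1) x_(k+1).\<close>
definition bwshift :: "(nat \<Rightarrow> real) \<Rightarrow> (nat \<Rightarrow> real) \<Rightarrow> (nat \<Rightarrow> real)" where
  "bwshift w x = (\<lambda>k. w (Suc k) * x (Suc k))"

definition q_lower_dens :: "nat \<Rightarrow> nat set \<Rightarrow> ereal" where
  "q_lower_dens q A =
     liminf (\<lambda>N::nat. ereal (real (card {n\<in>A. n \<le> N ^ q}) / real N))"

definition l2_q_freq_hypercyclic :: "nat \<Rightarrow> ((nat \<Rightarrow> real) \<Rightarrow> (nat \<Rightarrow> real)) \<Rightarrow> bool" where
  "l2_q_freq_hypercyclic q T \<longleftrightarrow>
     (\<exists>x\<in>l2. \<forall>U. l2_open U \<and> U \<noteq> {} \<longrightarrow> q_lower_dens q {n. (T ^^ n) x \<in> U} > 0)"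

definition l2_freq_hypercyclic :: "((nat \<Rightarrow> real) \<Rightarrow> (nat \<Rightarrow> real)) \<Rightarrow> bool" where
  "l2_freq_hypercyclic T \<longleftrightarrow> l2_q_freq_hypercyclic 1 T"

end

theory Submission
  imports
    Defs
    "HOL-Library.Discrete_Functions"
    "HOL-Computational_Algebra.Factorial_Ring"
    "HOL-Real_Asymp.Real_Asymp"
begin

(* Iterates.  The weights telescope: (B^n x)_i = sqrt((i+n+1)/(i+1)) x_(i+n).

   If B^n x is within 1/2 of e_0 in the 0-th coordinate then
   (n+1) x_n^2 > 1/4; for a square-summable x the set of such n cannot have positive lower
   density, since its elements in a window [M, N] would carry l2-mass of order (density)/4
   while the tail of the series beyond M is arbitrarily small.

   Enumerate the finitely supported rational vectors v_k (a dense
   set).  Cut the indices into the blocks [J^2, (J+1)^2) and put into block J the vector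
   v_(nu J), nu the 2-adic valuation, divided by the weights so that B^(J^2) moves it exactly
   onto the first coordinates -- but only if v_(nu J) has size at most the budget J^(1/4).
   In B^(j^2) x the later blocks contribute an error of squared norm O(j^(-1/4)) (a block-wise
   estimate against the summable sequence d^(-3/2)), so B^(j^2) x approaches v_k along
   j = 2^k (2r+1).  The squares of an arithmetic progression have positive 2-lower density,
   and q-lower density increases with q. *)

section \<open>Iterates of the weighted backward shift\<close>

lemma bwshift_power:
  "(bwshift w ^^ n) x = (\<lambda>k. (\<Prod>m<n. w (k + m + 1)) * x (k + n))"
proof (induction n)
  case (Suc n)
  have "(bwshift w ^^ Suc n) x = bwshift w (\<lambda>k. (\<Prod>m<n. w (k + m + 1)) * x (k + n))"
    by (simp only: funpow.simps(2) o_apply Suc.IH)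
  also have "\<dots> = (\<lambda>k. (\<Prod>m<Suc n. w (k + m + 1)) * x (k + Suc n))"
    by (simp add: bwshift_def prod.lessThan_Suc_shift mult.assoc del: prod.lessThan_Suc)
  finally show ?case .
qed simp

text \<open>The product of the weights \<open>w (i+1) \<dots> w (i+n)\<close> for our weights.\<close>
definition wprod :: "nat \<Rightarrow> nat \<Rightarrow> real" where
  "wprod i n = sqrt (real (i + n + 1) / real (i + 1))"

lemma wprod_sq: "(wprod i n)^2 = real (i + n + 1) / real (i + 1)"
  by (simp add: wprod_def)

lemma wprod_pos: "wprod i n > 0"
  by (simp add: wprod_def)

text \<open>For \<open>w\<^sub>n = \<surd>((n+1)/n)\<close> the product telescopes.\<close>
lemma weight_product:
  assumes w: "\<And>n. n \<ge> 1 \<Longrightarrow> w n = sqrt (real (n + 1) / real n)"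
  shows "(\<Prod>m<n. w (k + m + 1)) = wprod k n"
proof (induction n)
  case 0
  show ?case by (simp add: wprod_def)
next
  case (Suc n)
  have telescope: "real (k + n + 1) / real (k + 1) * (real (k + n + 2) / real (k + n + 1))
      = real (k + Suc n + 1) / real (k + 1)"
  proof -
    have "\<And>a b c :: real. a \<noteq> 0 \<Longrightarrow> a / b * (c / a) = c / b" by simp
    then show ?thesis by (simp add: ac_simps del: of_nat_add)
  qed
  have "(\<Prod>m<Suc n. w (k + m + 1)) = wprod k n * w (k + n + 1)"
    by (simp only: prod.lessThan_Suc Suc.IH)
  also have "\<dots> = sqrt (real (k + n + 1) / real (k + 1)) * sqrt (real (k + n + 2) / real (k + n + 1))"
    using w[of "k + n + 1"] by (simp add: wprod_def add.assoc)
  also have "\<dots> = sqrt (real (k + n + 1) / real (k + 1) * (real (k + n + 2) / real (k + n + 1)))"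
    by (rule real_sqrt_mult[symmetric])
  also have "\<dots> = wprod k (Suc n)"
    unfolding telescope wprod_def ..
  finally show ?case .
qed

lemma orbit_formula:
  assumes w: "\<And>n. n \<ge> 1 \<Longrightarrow> w n = sqrt (real (n + 1) / real n)"
  shows "(bwshift w ^^ n) x = (\<lambda>i. wprod i n * x (i + n))"
  by (simp only: bwshift_power weight_product[OF w])

lemma sq_sum_le: "(a + b)^2 \<le> 2 * a^2 + 2 * (b::real)^2"
  using zero_le_power2[of "a - b"] by (simp add: power2_eq_square algebra_simps)

lemma sq_summable_add:
  fixes a b :: "nat \<Rightarrow> real"
  assumes a: "summable (\<lambda>i. (a i)^2)" and b: "summable (\<lambda>i. (b i)^2)"
  shows "summable (\<lambda>i. (a i + b i)^2)"
    and "(\<Sum>i. (a i + b i)^2) \<le> 2 * (\<Sum>i. (a i)^2) + 2 * (\<Sum>i. (b i)^2)"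
proof -
  have bound: "summable (\<lambda>i. 2 * (a i)^2 + 2 * (b i)^2)"
    using a b by (intro summable_add summable_mult)
  show sum: "summable (\<lambda>i. (a i + b i)^2)"
    by (rule summable_comparison_test[OF _ bound]) (auto intro: sq_sum_le)
  have "(\<Sum>i. (a i + b i)^2) \<le> (\<Sum>i. 2 * (a i)^2 + 2 * (b i)^2)"
    by (rule suminf_le[OF _ sum bound]) (rule sq_sum_le)
  also have "\<dots> = 2 * (\<Sum>i. (a i)^2) + 2 * (\<Sum>i. (b i)^2)"
    using a b by (simp add: suminf_add[symmetric] suminf_mult summable_mult)
  finally show "(\<Sum>i. (a i + b i)^2) \<le> 2 * (\<Sum>i. (a i)^2) + 2 * (\<Sum>i. (b i)^2)" .
qed

lemma l2_norm_add_less: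
  fixes a b :: "nat \<Rightarrow> real"
  assumes "summable (\<lambda>i. (a i)^2)" "summable (\<lambda>i. (b i)^2)" "e > 0"
    and "(\<Sum>i. (a i)^2) < e^2 / 4" "(\<Sum>i. (b i)^2) < e^2 / 4"
  shows "l2_norm (\<lambda>i. a i + b i) < e"
proof -
  have "(\<Sum>i. (a i + b i)^2) < e^2"
    using sq_summable_add(2)[OF assms(1,2)] assms(4,5) by linarith
  then have "l2_norm (\<lambda>i. a i + b i) < sqrt (e^2)"
    unfolding l2_norm_def by (simp only: real_sqrt_less_iff)
  then show ?thesis using \<open>e > 0\<close> by simp
qed

lemma coord_le_l2_norm:
  assumes "summable (\<lambda>i. (v i)^2)"
  shows "\<bar>v i\<bar> \<le> l2_norm v"
proof -
  have "(\<Sum>n\<in>{i}. (v n)^2) \<le> (\<Sum>n. (v n)^2)"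
    by (rule sum_le_suminf[OF assms]) auto
  then show ?thesis
    unfolding l2_norm_def by (intro real_le_rsqrt) simp
qed

lemma l2_open_coordinate_slab: "l2_open {z \<in> l2. \<bar>z i - c\<bar> < r}"
  unfolding l2_open_def
proof (intro conjI ballI)
  fix y assume y: "y \<in> {z \<in> l2. \<bar>z i - c\<bar> < r}"
  show "\<exists>e>0. \<forall>z\<in>l2. l2_norm (z - y) < e \<longrightarrow> z \<in> {z \<in> l2. \<bar>z i - c\<bar> < r}"
  proof (intro exI[of _ "r - \<bar>y i - c\<bar>"] conjI ballI impI)
    show "r - \<bar>y i - c\<bar> > 0" using y by simp
    fix z assume z: "z \<in> l2" and close: "l2_norm (z - y) < r - \<bar>y i - c\<bar>"
    have "summable (\<lambda>n. (z n + - y n)^2)"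
      using z y by (intro sq_summable_add) (simp_all add: l2_def)
    then have "\<bar>z i - y i\<bar> \<le> l2_norm (z - y)"
      using coord_le_l2_norm[of "\<lambda>n. z n + - y n" i] by (simp add: fun_diff_def)
    then show "z \<in> {z \<in> l2. \<bar>z i - c\<bar> < r}" using z close by auto
  qed
qed auto

section \<open>Lower densities\<close>

lemma q_lower_dens_mono:
  assumes "q \<le> q'" "A \<subseteq> B"
  shows "q_lower_dens q A \<le> q_lower_dens q' B"
  unfolding q_lower_dens_def
proof (rule Liminf_mono, rule eventually_sequentiallyI)
  fix N :: nat assume "1 \<le> N"
  with assms(1) have "N ^ q \<le> N ^ q'" by (rule power_increasing)
  then have "card {n \<in> A. n \<le> N ^ q} \<le> card {n \<in> B. n \<le> N ^ q'}"
    using assms(2) by (intro card_mono) auto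
  then show "ereal (real (card {n \<in> A. n \<le> N ^ q}) / real N)
      \<le> ereal (real (card {n \<in> B. n \<le> N ^ q'}) / real N)"
    by (simp add: divide_right_mono)
qed

lemma q_lower_dens_pos_if_linear:
  assumes "c > 0" and lin: "\<And>N. N \<ge> M \<Longrightarrow> c * real N \<le> real (card {n \<in> A. n \<le> N ^ q})"
  shows "q_lower_dens q A > 0"
proof -
  have "\<forall>\<^sub>F N in sequentially. ereal c \<le> ereal (real (card {n \<in> A. n \<le> N ^ q}) / real N)"
  proof (rule eventually_sequentiallyI[of "max M 1"])
    fix N assume N: "max M 1 \<le> N"
    then show "ereal c \<le> ereal (real (card {n \<in> A. n \<le> N ^ q}) / real N)"
      using lin[of N] by (simp add: pos_le_divide_eq)
  qed
  then have "ereal c \<le> q_lower_dens q A"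
    unfolding q_lower_dens_def by (rule Liminf_bounded)
  with \<open>c > 0\<close> show ?thesis by (simp add: less_le_trans[of 0 "ereal c"])
qed

lemma q_lower_dens_pos_imp_linear:
  assumes "q_lower_dens q A > 0"
  obtains c N0 where "c > 0" "\<And>N. N \<ge> N0 \<Longrightarrow> c * real N < real (card {n \<in> A. n \<le> N ^ q})"
proof -
  obtain c where c: "0 < ereal c" "ereal c < q_lower_dens q A"
    using ereal_dense2[OF assms] by blast
  have "\<forall>\<^sub>F N in sequentially. ereal c < ereal (real (card {n \<in> A. n \<le> N ^ q}) / real N)"
    using c(2) unfolding q_lower_dens_def by (rule less_LiminfD)
  then obtain N1 where N1: "\<And>N. N \<ge> N1 \<Longrightarrow> c < real (card {n \<in> A. n \<le> N ^ q}) / real N"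
    unfolding eventually_sequentially by auto
  show ?thesis
  proof (rule that[of c "max N1 1"])
    show "c > 0" using c(1) by simp
    fix N assume "N \<ge> max N1 1"
    then show "c * real N < real (card {n \<in> A. n \<le> N ^ q})"
      using N1[of N] by (simp add: pos_less_divide_eq)
  qed
qed

lemma squares_of_progression_dens:
  assumes "0 < a" "b \<le> a" and progression: "\<And>r. r \<ge> m \<Longrightarrow> (a * r + b)^2 \<in> A"
  shows "q_lower_dens 2 A > 0"
proof (rule q_lower_dens_pos_if_linear[where c = "1 / (2 * real a)" and M = "2 * a * (m + 1)"])
  show "1 / (2 * real a) > 0" using \<open>0 < a\<close> by simp
  fix N :: nat assume N: "N \<ge> 2 * a * (m + 1)"
  define q where "q = N div a"
  define h where "h r = (a * r + b)^2" for r
  have "inj_on h {m..<q}"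
    using \<open>0 < a\<close> by (intro inj_onI) (simp add: h_def power2_eq_iff_nonneg)
  then have "q - m = card (h ` {m..<q})" by (simp add: card_image)
  also have "\<dots> \<le> card {n \<in> A. n \<le> N^2}"
  proof (intro card_mono)
    show "h ` {m..<q} \<subseteq> {n \<in> A. n \<le> N^2}"
    proof
      fix n assume "n \<in> h ` {m..<q}"
      then obtain r where r: "m \<le> r" "r < q" "n = h r" by auto
      have "a * r + b \<le> a * q"
        using r(2) \<open>b \<le> a\<close> mult_le_mono2[of "r + 1" q a] by simp
      also have "\<dots> \<le> N" by (simp add: q_def)
      finally have "n \<le> N^2" using r(3) by (simp add: h_def power_mono)
      then show "n \<in> {n \<in> A. n \<le> N^2}" using progression[OF r(1)] r(3) by (simp add: h_def)
    qed
  qed simp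
  finally have card: "q - m \<le> card {n \<in> A. n \<le> N^2}" .
  have "a * q + N mod a = N" unfolding q_def by (rule mult_div_mod_eq)
  moreover have "N mod a < a" using \<open>0 < a\<close> by simp
  ultimately have "N < a * q + a" by linarith
  then have "N \<le> 2 * a * (q - m)"
    using N by (simp add: algebra_simps diff_mult_distrib2)
  then have "real N \<le> 2 * real a * real (q - m)"
    by (metis of_nat_le_iff of_nat_mult of_nat_numeral)
  then have "1 / (2 * real a) * real N \<le> real (q - m)"
    using \<open>0 < a\<close> by (simp add: field_simps)
  also have "\<dots> \<le> real (card {n \<in> A. n \<le> N^2})" using card by simp
  finally show "1 / (2 * real a) * real N \<le> real (card {n \<in> A. n \<le> N^2})" .
qed

section \<open>The shift is not frequently hypercyclic\<close>

lemma sum_window_le_tail: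
  fixes f :: "nat \<Rightarrow> real"
  assumes "summable f" "\<And>n. 0 \<le> f n" "B \<subseteq> {M..N}"
  shows "(\<Sum>n\<in>B. f n) \<le> (\<Sum>i. f (i + M))"
proof -
  have "(\<Sum>n\<in>B. f n) \<le> (\<Sum>n\<in>{0 + M..(N - M) + M}. f n)"
    using assms(2,3) by (intro sum_mono2) auto
  also have "\<dots> = (\<Sum>i\<in>{0..N - M}. f (i + M))"
    by (rule sum.shift_bounds_cl_nat_ivl)
  also have "\<dots> \<le> (\<Sum>i. f (i + M))"
    using assms(1,2) by (intro sum_le_suminf) (simp_all add: summable_iff_shift)
  finally show ?thesis .
qed

lemma sparse_set_of_summable:
  fixes f :: "nat \<Rightarrow> real"
  assumes f: "summable f" "\<And>n. 0 \<le> f n" and "d > 0"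
  shows "\<not> q_lower_dens 1 {n. d < real (n + 1) * f n} > 0"
proof
  define A where "A = {n. d < real (n + 1) * f n}"
  assume "q_lower_dens 1 {n. d < real (n + 1) * f n} > 0"
  then obtain c N0 where c: "c > 0"
    and lin: "\<And>N. N \<ge> N0 \<Longrightarrow> c * real N < real (card {n \<in> A. n \<le> N ^ 1})"
    unfolding A_def[symmetric] using q_lower_dens_pos_imp_linear by blast
  obtain M1 where M1: "\<And>m. m \<ge> M1 \<Longrightarrow> norm (\<Sum>i. f (i + m)) < c * d / 4"
    using suminf_exist_split[OF _ f(1), of "c * d / 4"] c \<open>d > 0\<close> by auto
  define M where "M = max N0 M1"
  define N where "N = M + nat \<lceil>2 * real (M + 1) / c\<rceil> + 1"
  define B where "B = {n \<in> A. M \<le> n \<and> n \<le> N}"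
  have N: "N \<ge> N0" "N \<ge> M" "N \<ge> 1" by (auto simp: N_def M_def)
  have cN: "2 * real (M + 1) \<le> c * real N"
  proof -
    have "2 * real (M + 1) / c \<le> real N" unfolding N_def by linarith
    then show ?thesis using c by (simp add: divide_le_eq mult.commute)
  qed
  txt \<open>Many elements of \<open>A\<close> lie in the window \<open>[M, N]\<close>, because only \<open>M\<close> lie below it.\<close>
  have "card {n \<in> A. n \<le> N} \<le> card (B \<union> {..<M})"
    by (intro card_mono) (auto simp: B_def)
  also have "\<dots> \<le> card B + M"
    using card_Un_le[of B "{..<M}"] by simp
  finally have "c * real N < real (card B) + real M"
    using lin[OF N(1)] by simp
  then have card_B: "c * real N / 2 \<le> real (card B)" using cN by simp
  txt \<open>Each of them carries mass at least \<open>d / (2 N)\<close> \<dots>\<close>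
  have "c * d / 4 = c * real N / 2 * (d / (2 * real N))" using N(3) by simp
  also have "\<dots> \<le> real (card B) * (d / (2 * real N))"
    using card_B \<open>d > 0\<close> by (intro mult_right_mono) auto
  also have "\<dots> = (\<Sum>n\<in>B. d / (2 * real N))" by simp
  also have "\<dots> \<le> (\<Sum>n\<in>B. f n)"
  proof (rule sum_mono)
    fix n assume n: "n \<in> B"
    then have "d / (2 * real N) \<le> d / real (n + 1)"
      using \<open>d > 0\<close> N(3) by (intro divide_left_mono) (auto simp: B_def)
    also have "\<dots> < f n" using n by (simp add: B_def A_def pos_divide_less_eq mult.commute)
    finally show "d / (2 * real N) \<le> f n" by simp
  qed
  txt \<open>\<dots> but the tail of the series beyond \<open>M\<close> is smaller than their total.\<close>
  also have "\<dots> \<le> (\<Sum>i. f (i + M))"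
    using f by (intro sum_window_le_tail) (auto simp: B_def)
  also have "\<dots> < c * d / 4" using M1[of M] by (simp add: M_def)
  finally show False by simp
qed

text \<open>No orbit visits the slab \<open>{z. |z 0 - 1| < 1/2}\<close> with positive lower density.\<close>
lemma not_freq_hypercyclic:
  assumes w: "\<And>n. n \<ge> 1 \<Longrightarrow> w n = sqrt (real (n + 1) / real n)"
  shows "\<not> l2_freq_hypercyclic (bwshift w)"
proof
  assume "l2_freq_hypercyclic (bwshift w)"
  then obtain x where x: "x \<in> l2"
    and visits: "\<And>U. l2_open U \<and> U \<noteq> {} \<Longrightarrow> q_lower_dens 1 {n. (bwshift w ^^ n) x \<in> U} > 0"
    unfolding l2_freq_hypercyclic_def l2_q_freq_hypercyclic_def by blast
  define U where "U = {z \<in> l2. \<bar>z 0 - 1\<bar> < 1/2}"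
  have "summable (\<lambda>i::nat. (if i = 0 then 1 else 0 :: real)^2)"
    by (rule summable_finite[of "{0}"]) auto
  then have "(\<lambda>i. if i = 0 then 1 else 0) \<in> U" by (simp add: U_def l2_def)
  then have "l2_open U \<and> U \<noteq> {}" unfolding U_def using l2_open_coordinate_slab by blast
  then have "q_lower_dens 1 {n. (bwshift w ^^ n) x \<in> U} > 0" by (rule visits)
  txt \<open>Being near \<open>e\<^sub>0\<close> at time \<open>n\<close> forces \<open>\<surd>(n+1) x\<^sub>n > 1/2\<close>.\<close>
  moreover have "{n. (bwshift w ^^ n) x \<in> U} \<subseteq> {n. 1/4 < real (n + 1) * (x n)^2}"
  proof
    fix n assume "n \<in> {n. (bwshift w ^^ n) x \<in> U}"
    then have "\<bar>(bwshift w ^^ n) x 0 - 1\<bar> < 1/2" by (simp add: U_def)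
    moreover have "(bwshift w ^^ n) x 0 = sqrt (real (n + 1)) * x n"
      by (simp add: orbit_formula[OF w] wprod_def)
    ultimately have "1/2 < sqrt (real (n + 1)) * x n" by linarith
    then have "(1/2)^2 < (sqrt (real (n + 1)) * x n)^2"
      by (intro power_strict_mono) auto
    then show "n \<in> {n. 1/4 < real (n + 1) * (x n)^2}"
      by (simp add: power_mult_distrib power_divide)
  qed
  then have "q_lower_dens 1 {n. (bwshift w ^^ n) x \<in> U}
      \<le> q_lower_dens 1 {n. 1/4 < real (n + 1) * (x n)^2}"
    by (rule q_lower_dens_mono[OF order_refl])
  moreover have "\<not> q_lower_dens 1 {n. 1/4 < real (n + 1) * (x n)^2} > 0"
    using x by (intro sparse_set_of_summable) (simp_all add: l2_def)
  ultimately show False by simp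
qed

section \<open>A dense sequence of finitely supported vectors\<close>

text \<open>The \<open>k\<close>-th finite list of rationals, viewed as a finitely supported vector, and its size:
  length plus the weighted squared norm that controls its preimage under the shift.\<close>
definition rat_list :: "nat \<Rightarrow> rat list" where
  "rat_list k = from_nat k"

definition rat_vec :: "nat \<Rightarrow> nat \<Rightarrow> real" where
  "rat_vec k i = (if i < length (rat_list k) then of_rat (rat_list k ! i) else 0)"

definition vec_size :: "nat \<Rightarrow> real" where
  "vec_size k = real (length (rat_list k))
     + (\<Sum>i<length (rat_list k). (rat_vec k i)^2 * real (i + 1))"

text \<open>These vectors are dense in \<open>l2\<close>: cut off a small tail, then round the remaining
  finitely many coordinates to rationals.\<close>
lemma rat_vec_dense:
  assumes y: "y \<in> l2" and "\<epsilon> > 0"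
  obtains k where "summable (\<lambda>i. (rat_vec k i - y i)^2)" "(\<Sum>i. (rat_vec k i - y i)^2) < \<epsilon>"
proof -
  have sy: "summable (\<lambda>i. (y i)^2)" using y by (simp add: l2_def)
  obtain N where N: "norm (\<Sum>i. (y (i + N))^2) < \<epsilon> / 2"
    using suminf_exist_split[OF _ sy, of "\<epsilon> / 2"] \<open>\<epsilon> > 0\<close> by auto
  define \<delta> where "\<delta> = sqrt (\<epsilon> / (2 * real (N + 1)))"
  have "\<delta> > 0" using \<open>\<epsilon> > 0\<close> by (simp add: \<delta>_def)
  have "\<exists>q::rat. \<bar>of_rat q - y i\<bar> < \<delta>" for i
  proof -
    obtain r where "r \<in> \<rat>" "y i - \<delta> < r" "r < y i + \<delta>"
      using Rats_dense_in_real[of "y i - \<delta>" "y i + \<delta>"] \<open>\<delta> > 0\<close> by auto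
    then obtain q where "y i - \<delta> < of_rat q" "of_rat q < y i + \<delta>"
      by (auto elim!: Rats_cases)
    then show ?thesis by (intro exI[of _ q]) (simp add: abs_diff_less_iff)
  qed
  then obtain f where f: "\<And>i. \<bar>of_rat (f i) - y i\<bar> < \<delta>" by metis
  define k where "k = to_nat (map f [0..<N])"
  have rv: "rat_vec k i = (if i < N then of_rat (f i) else 0)" for i
    by (simp add: rat_vec_def rat_list_def k_def)
  define g where "g i = (rat_vec k i - y i)^2" for i
  have g_tail: "g (i + N) = (y (i + N))^2" for i by (simp add: g_def rv)
  have "summable (\<lambda>i. g (i + N))" unfolding g_tail using sy by (subst summable_iff_shift)
  then have sg: "summable g" by (rule summable_iff_shift[THEN iffD1])
  have g_head: "g i \<le> \<epsilon> / (2 * real (N + 1))" if "i < N" for i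
  proof -
    have "\<bar>rat_vec k i - y i\<bar> < \<delta>" using f[of i] that by (simp add: rv)
    then have "\<bar>rat_vec k i - y i\<bar>^2 \<le> \<delta>^2" by (intro power_mono) auto
    then show ?thesis using \<open>\<epsilon> > 0\<close> by (simp add: g_def \<delta>_def)
  qed
  have "(\<Sum>i<N. g i) \<le> real N * (\<epsilon> / (2 * real (N + 1)))"
    using sum_mono[of "{..<N}" g "\<lambda>_. \<epsilon> / (2 * real (N + 1))"] g_head by simp
  also have "\<dots> \<le> \<epsilon> / 2"
    using \<open>\<epsilon> > 0\<close> by (simp add: field_simps)
  finally have head: "(\<Sum>i<N. g i) \<le> \<epsilon> / 2" .
  have tail: "(\<Sum>i. g (i + N)) < \<epsilon> / 2" using N by (simp add: g_tail)
  have "suminf g < \<epsilon>"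
    using suminf_split_initial_segment[OF sg, of N] head tail by linarith
  with sg show ?thesis unfolding g_def by (rule that)
qed

lemma rat_vec_weighted_le: "(\<Sum>i<N. (rat_vec k i)^2 * real (i + 1)) \<le> vec_size k"
proof -
  have "(\<Sum>i<N. (rat_vec k i)^2 * real (i + 1))
      \<le> (\<Sum>i<N + length (rat_list k). (rat_vec k i)^2 * real (i + 1))"
    by (rule sum_mono2) auto
  also have "\<dots> = (\<Sum>i<length (rat_list k). (rat_vec k i)^2 * real (i + 1))"
    by (rule sum.mono_neutral_right) (auto simp: rat_vec_def)
  finally show ?thesis by (simp add: vec_size_def)
qed

lemma rat_vec_support:
  assumes "vec_size k \<le> real i"
  shows "rat_vec k i = 0"
proof -
  have "real (length (rat_list k)) \<le> vec_size k"
    unfolding vec_size_def by (simp add: sum_nonneg)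
  then show ?thesis using assms by (simp add: rat_vec_def)
qed

section \<open>The 2-frequently hypercyclic vector\<close>

lemma sqrt_le_self:
  fixes x :: real
  assumes "1 \<le> x"
  shows "sqrt x \<le> x"
proof -
  have "sqrt x * 1 \<le> sqrt x * sqrt x" using assms by (intro mult_left_mono) auto
  then show ?thesis using assms by simp
qed

text \<open>Block \<open>j\<close> may carry a target vector of size at most \<open>j^(1/4)\<close>.\<close>
definition budget :: "nat \<Rightarrow> real" where
  "budget j = sqrt (sqrt (real j))"

lemma budget_nonneg: "budget j \<ge> 0"
  by (simp add: budget_def)

lemma budget_le: "budget j \<le> real j"
proof (cases "j = 0")
  case False
  have "sqrt (sqrt (real j)) \<le> sqrt (real j)" "sqrt (real j) \<le> real j"
    using False by (simp_all add: sqrt_le_self)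
  then show ?thesis unfolding budget_def by linarith
qed (simp add: budget_def)

text \<open>The budget grows without bound, so every fixed target vector eventually fits.\<close>
lemma budget_eventually_ge: "\<forall>\<^sub>F j in sequentially. c \<le> budget j"
proof -
  have "filterlim budget at_top sequentially"
    unfolding budget_def by real_asymp
  then show ?thesis by (simp add: filterlim_at_top)
qed

definition block_vec :: "nat \<Rightarrow> nat \<Rightarrow> real" where
  "block_vec j =
     (if vec_size (multiplicity 2 j) \<le> budget j then rat_vec (multiplicity 2 j) else (\<lambda>_. 0))"

lemma block_vec_weighted_le: "(\<Sum>i<N. (block_vec j i)^2 * real (i + 1)) \<le> budget j"
  using rat_vec_weighted_le[where N=N and k="multiplicity 2 j"] budget_nonneg[of j]
  by (auto simp: block_vec_def)

lemma block_vec_support: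
  assumes "budget j \<le> real i"
  shows "block_vec j i = 0"
  using assms rat_vec_support[of "multiplicity 2 j" i] by (auto simp: block_vec_def)

lemma multiplicity_odd_multiple: "multiplicity (2::nat) (2^(k+1) * r + 2^k) = k"
proof -
  have factor: "2^(k+1) * r + 2^k = (2 * r + 1) * (2::nat)^k" by (simp add: algebra_simps)
  have "multiplicity (2::nat) (2^(k+1) * r + 2^k) = multiplicity 2 ((2 * r + 1) * (2::nat)^k)"
    by (simp only: factor)
  also have "\<dots> = multiplicity 2 ((2::nat)^k)"
    by (rule multiplicity_prime_elem_times_other) simp_all
  also have "\<dots> = k" by (simp add: multiplicity_same_power)
  finally show ?thesis .
qed

text \<open>The vector: on block \<open>[J^2, (J+1)^2)\<close> it is the target of \<open>J\<close>, pre-divided by the weights.\<close>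
definition hc_vec :: "nat \<Rightarrow> real" where
  "hc_vec m = (let J = floor_sqrt m; i = m - J^2 in block_vec J i / wprod i (J^2))"

text \<open>On block \<open>J\<close> the vector is given explicitly, since \<open>floor_sqrt (J^2 + i) = J\<close>
  for \<open>i \<le> 2J\<close>.\<close>
lemma hc_vec_block:
  assumes "i \<le> 2 * J"
  shows "hc_vec (J^2 + i) = block_vec J i / wprod i (J^2)"
proof -
  have "floor_sqrt (J^2 + i) = J"
    using assms by (intro floor_sqrt_unique) (auto simp: power2_eq_square)
  then show ?thesis by (simp add: hc_vec_def)
qed

lemma hc_vec_sq_block:
  assumes "i \<le> 2 * J"
  shows "(hc_vec (J^2 + i))^2 = (block_vec J i)^2 * real (i + 1) / real (J^2 + i + 1)"
  using hc_vec_block[OF assms] by (simp add: power_divide wprod_sq ac_simps)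

text \<open>The error \<open>B^(j^2) x - (target of j)\<close>; its squares are the squared coordinates of
  \<open>B^(j^2) x\<close> coming from the blocks after \<open>j\<close>, indexed by their original position.\<close>
definition orbit_error :: "nat \<Rightarrow> nat \<Rightarrow> real" where
  "orbit_error j i = wprod i (j^2) * hc_vec (i + j^2) - block_vec j i"

definition orbit_tail :: "nat \<Rightarrow> nat \<Rightarrow> real" where
  "orbit_tail j m = (if m < (j + 1)^2 then 0 else (wprod (m - j^2) (j^2) * hc_vec m)^2)"

text \<open>Inside block \<open>j\<close> the shift reproduces the target exactly, and beyond it the target
  vanishes.\<close>
lemma orbit_error_sq: "(orbit_error j i)^2 = orbit_tail j (i + j^2)"
proof (cases "i \<le> 2 * j")
  case True
  then have "orbit_error j i = 0"
    using hc_vec_block[OF True] wprod_pos[of i "j^2"] by (simp add: orbit_error_def add.commute)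
  moreover have "i + j^2 < (j + 1)^2" using True by (simp add: power2_eq_square)
  ultimately show ?thesis by (simp add: orbit_tail_def)
next
  case False
  then have "block_vec j i = 0"
    using budget_le[of j] by (intro block_vec_support) simp
  moreover have "\<not> i + j^2 < (j + 1)^2" using False by (simp add: power2_eq_square)
  ultimately show ?thesis by (simp add: orbit_tail_def orbit_error_def)
qed

text \<open>The summable majorant \<open>d \<mapsto> (d+1)^(-3/2)\<close> for the block contributions.\<close>
definition decay :: "nat \<Rightarrow> real" where
  "decay d = 1 / (real (d + 1) * sqrt (real (d + 1)))"

lemma decay_nonneg: "decay d \<ge> 0"
  by (simp add: decay_def)

text \<open>Summability via the \<open>p\<close>-series with \<open>p = 3/2\<close>.\<close>
lemma decay_powr: "decay d = real (Suc d) powr (-(3/2))"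
proof -
  have "real (Suc d) powr (3/2) = real (Suc d) powr (1 + 1/2)" by simp
  also have "\<dots> = real (Suc d) powr 1 * real (Suc d) powr (1/2)" by (rule powr_add)
  also have "\<dots> = real (Suc d) * sqrt (real (Suc d))"
    by (simp only: powr_one_gt_zero_iff powr_half_sqrt of_nat_0_le_iff powr_one)
  finally have "real (Suc d) powr (-(3/2)) = inverse (real (Suc d) * sqrt (real (Suc d)))"
    by (simp only: powr_minus)
  then show ?thesis by (simp only: decay_def divide_inverse Suc_eq_plus1 mult_1)
qed

lemma summable_decay: "summable decay"
proof -
  have "summable (\<lambda>n. real n powr (-(3/2)))" by (subst summable_real_powr_iff) simp
  then have "summable (\<lambda>d. real (Suc d) powr (-(3/2)))" by (rule summable_Suc_iff[THEN iffD2])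
  then show ?thesis by (simp only: decay_powr[abs_def])
qed

lemma quarter_root_ineq:
  fixes a b :: real
  assumes "0 \<le> a" "a < b"
  shows "max 1 (sqrt (sqrt a)) * sqrt (sqrt b) * ((b - a) * sqrt (b - a)) \<le> b^2 - a^2 + 1"
proof (cases "1 \<le> a")
  case True
  define t where "t = sqrt (sqrt (a + b))"
  have "t \<ge> 0" "t^2 = sqrt (a + b)" using assms by (simp_all add: t_def)
  then have t4: "t * t * t^2 = a + b" using assms by (simp add: power2_eq_square)
  have "sqrt (sqrt a) * sqrt (sqrt b) * sqrt (b - a) \<le> t * t * t^2"
    using assms \<open>t \<ge> 0\<close> \<open>t^2 = sqrt (a + b)\<close>
    by (intro mult_mono) (simp_all add: t_def)
  then have "sqrt (sqrt a) * sqrt (sqrt b) * sqrt (b - a) * (b - a) \<le> (a + b) * (b - a)"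
    unfolding t4 using assms by (intro mult_right_mono) auto
  moreover have "max 1 (sqrt (sqrt a)) = sqrt (sqrt a)" using True by simp
  ultimately show ?thesis by (simp add: power2_eq_square algebra_simps)
next
  case False
  have "sqrt (sqrt b) * ((b - a) * sqrt (b - a)) \<le> sqrt (sqrt b) * (b * sqrt b)"
    using assms by (intro mult_left_mono mult_mono) auto
  also have "\<dots> \<le> b^2 - a^2 + 1"
  proof (cases "1 \<le> b")
    case True
    then have "sqrt (sqrt b) * (b * sqrt b) \<le> sqrt b * (b * sqrt b)"
      by (intro mult_right_mono sqrt_le_self) auto
    moreover have "a^2 \<le> 1" using False assms by (intro power_le_one) auto
    moreover have "sqrt b * (b * sqrt b) = b^2" using True by (simp add: power2_eq_square)
    ultimately show ?thesis by linarith
  next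
    case b: False
    have "sqrt (sqrt b) * (b * sqrt b) \<le> 1 * (1 * 1)"
      using b assms by (intro mult_mono) auto
    moreover have "a^2 \<le> b^2" using assms by (intro power_mono) auto
    ultimately show ?thesis by simp
  qed
  finally show ?thesis using False assms by simp
qed

lemma budget_block_ineq:
  assumes "j < J"
  shows "budget J / real (J^2 - j^2 + 1) \<le> decay (J - j - 1) / max 1 (budget j)"
proof -
  have "j^2 < J^2" using assms by (simp add: power_strict_mono)
  then have D: "real (J^2 - j^2 + 1) = (real J)^2 - (real j)^2 + 1"
    by (simp add: of_nat_diff less_imp_le)
  have P: "real (J - j - 1 + 1) = real J - real j" using assms by (simp add: of_nat_diff)
  have "max 1 (budget j) * budget J * ((real J - real j) * sqrt (real J - real j))
      \<le> real (J^2 - j^2 + 1)"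
    unfolding D budget_def using assms by (intro quarter_root_ineq) auto
  moreover have "0 < (real J - real j) * sqrt (real J - real j)" "0 < max 1 (budget j)"
    using assms by auto
  ultimately show ?thesis
    unfolding decay_def P by (simp add: divide_simps ac_simps del: of_nat_add)
qed

lemma sum_square_blocks:
  fixes f :: "nat \<Rightarrow> 'a::comm_monoid_add" and n :: nat
  shows "(\<Sum>m<n^2. f m) = (\<Sum>J<n. \<Sum>i<2 * J + 1. f (J^2 + i))"
proof (induction n)
  case (Suc n)
  have split: "{..<(Suc n)^2} = {..<n^2} \<union> {n^2..<n^2 + (2 * n + 1)}"
    by (auto simp: power2_eq_square)
  have "(\<Sum>m<(Suc n)^2. f m) = (\<Sum>m<n^2. f m) + (\<Sum>m\<in>{n^2..<n^2 + (2 * n + 1)}. f m)"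
    unfolding split by (rule sum.union_disjoint) auto
  also have "(\<Sum>m\<in>{n^2..<n^2 + (2 * n + 1)}. f m) = (\<Sum>i<2 * n + 1. f (n^2 + i))"
    using sum.shift_bounds_nat_ivl[of f 0 "n^2" "2 * n + 1"]
    by (simp add: atLeast0LessThan add.commute)
  finally show ?case using Suc.IH by simp
qed simp

lemma summable_by_square_blocks:
  fixes f b :: "nat \<Rightarrow> real"
  assumes f: "\<And>m. 0 \<le> f m" and blocks: "\<And>J. (\<Sum>i<2 * J + 1. f (J^2 + i)) \<le> b J"
    and b: "summable b"
  shows "summable f \<and> suminf f \<le> suminf b"
proof -
  have b_nonneg: "0 \<le> b J" for J
  proof -
    have "0 \<le> (\<Sum>i<2 * J + 1. f (J^2 + i))" using f by (intro sum_nonneg)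
    then show ?thesis using blocks[of J] by linarith
  qed
  have partial: "(\<Sum>m<n. f m) \<le> suminf b" for n
  proof -
    have "(\<Sum>m<n. f m) \<le> (\<Sum>m<n^2. f m)"
      using f by (intro sum_mono2) (auto simp: power2_eq_square)
    also have "\<dots> = (\<Sum>J<n. \<Sum>i<2 * J + 1. f (J^2 + i))" by (rule sum_square_blocks)
    also have "\<dots> \<le> (\<Sum>J<n. b J)" by (intro sum_mono blocks)
    also have "\<dots> \<le> suminf b" using b b_nonneg by (intro sum_le_suminf) auto
    finally show ?thesis .
  qed
  have "summable f"
  proof (rule bounded_imp_summable)
    show "(\<Sum>m\<le>n. f m) \<le> suminf b" for n
      using partial[of "Suc n"] unfolding lessThan_Suc_atMost .
  qed (rule f)
  with partial show ?thesis by (simp add: suminf_le_const)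
qed

lemma orbit_tail_in_block:
  assumes "j < J" "i \<le> 2 * J"
  shows "orbit_tail j (J^2 + i) \<le> (block_vec J i)^2 * real (i + 1) / real (J^2 - j^2 + 1)"
proof -
  let ?m = "J^2 + i"
  have "j^2 < J^2" "(j + 1)^2 \<le> J^2"
    using assms(1) by (simp_all add: power_strict_mono power_mono)
  have "?m - j^2 + j^2 + 1 = ?m + 1" using \<open>j^2 < J^2\<close> by simp
  then have weight: "(wprod (?m - j^2) (j^2))^2 = real (?m + 1) / real (?m - j^2 + 1)"
    by (simp only: wprod_sq)
  have "\<not> ?m < (j + 1)^2" using \<open>(j + 1)^2 \<le> J^2\<close> by linarith
  then have "orbit_tail j ?m = (wprod (?m - j^2) (j^2))^2 * (hc_vec ?m)^2"
    by (simp add: orbit_tail_def power_mult_distrib)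
  also have "\<dots> = real (?m + 1) / real (?m - j^2 + 1)
      * ((block_vec J i)^2 * real (i + 1) / real (?m + 1))"
    using hc_vec_sq_block[OF assms(2)] by (simp only: weight)
  also have "\<dots> = (block_vec J i)^2 * real (i + 1) / real (?m - j^2 + 1)"
    by (simp del: of_nat_add)
  also have "\<dots> \<le> (block_vec J i)^2 * real (i + 1) / real (J^2 - j^2 + 1)"
  proof (rule frac_le)
    have "J^2 - j^2 + 1 \<le> ?m - j^2 + 1" using \<open>j^2 < J^2\<close> by arith
    then show "real (J^2 - j^2 + 1) \<le> real (?m - j^2 + 1)" by (rule of_nat_mono)
  qed simp_all
  finally show ?thesis .
qed

lemma orbit_tail_block:
  "(\<Sum>i<2 * J + 1. orbit_tail j (J^2 + i))
     \<le> (if j < J then decay (J - j - 1) / max 1 (budget j) else 0)"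
proof (cases "j < J")
  case False
  have "orbit_tail j (J^2 + i) = 0" if "i < 2 * J + 1" for i
  proof -
    have "J^2 + i < (J + 1)^2" using that by (simp add: power2_eq_square)
    also have "(J + 1)^2 \<le> (j + 1)^2" using False by (simp add: power_mono)
    finally show ?thesis by (simp add: orbit_tail_def)
  qed
  then show ?thesis using False by simp
next
  case True
  have "(\<Sum>i<2 * J + 1. orbit_tail j (J^2 + i))
      \<le> (\<Sum>i<2 * J + 1. (block_vec J i)^2 * real (i + 1)) / real (J^2 - j^2 + 1)"
    unfolding sum_divide_distrib by (intro sum_mono orbit_tail_in_block[OF True]) simp
  also have "\<dots> \<le> budget J / real (J^2 - j^2 + 1)"
    by (intro divide_right_mono block_vec_weighted_le) simp
  also have "\<dots> \<le> decay (J - j - 1) / max 1 (budget j)"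
    using True by (rule budget_block_ineq)
  finally show ?thesis using True by simp
qed

lemma orbit_error_bound:
  "summable (\<lambda>i. (orbit_error j i)^2)
    \<and> (\<Sum>i. (orbit_error j i)^2) \<le> (\<Sum>d. decay d) / max 1 (budget j)"
proof -
  define b where "b J = (if j < J then decay (J - j - 1) / max 1 (budget j) else 0)" for J
  have "(\<lambda>J. b (J + Suc j)) sums ((\<Sum>d. decay d) / max 1 (budget j))"
    using sums_divide[OF summable_sums[OF summable_decay]] by (simp add: b_def)
  then have b: "b sums ((\<Sum>d. decay d) / max 1 (budget j))"
    by (subst (asm) sums_zero_iff_shift) (simp_all add: b_def)
  have tail: "summable (orbit_tail j) \<and> suminf (orbit_tail j) \<le> suminf b"
    using b unfolding b_def by (intro summable_by_square_blocks orbit_tail_block)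
      (auto simp: orbit_tail_def sums_iff)
  then have "summable (\<lambda>i. orbit_tail j (i + j^2))" by simp
  moreover have "(\<Sum>i. orbit_tail j (i + j^2)) \<le> suminf (orbit_tail j)"
    using tail suminf_split_initial_segment[of "orbit_tail j" "j^2"]
      sum_nonneg[of "{..<j^2}" "orbit_tail j"] by (simp add: orbit_tail_def)
  ultimately show ?thesis
    using tail b by (simp add: orbit_error_sq sums_iff)
qed

text \<open>The case \<open>j = 0\<close> of the error bound shows that the vector lies in \<open>l2\<close>.\<close>
lemma hc_vec_l2: "hc_vec \<in> l2"
proof -
  have "orbit_error 0 i = hc_vec i" for i
    using block_vec_support[of 0 i] by (simp add: orbit_error_def wprod_def budget_def)
  then show ?thesis using orbit_error_bound[of 0] by (simp add: l2_def)
qed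

lemma decay_sum_over_budget:
  assumes "\<epsilon> > 0"
  shows "\<forall>\<^sub>F j in sequentially. (\<Sum>d. decay d) / max 1 (budget j) < \<epsilon>"
proof -
  define Z where "Z = (\<Sum>d. decay d)"
  have "Z \<ge> 0" unfolding Z_def using summable_decay decay_nonneg by (rule suminf_nonneg)
  have "Z / max 1 (budget j) < \<epsilon>" if large: "Z / \<epsilon> + 1 \<le> budget j" for j
  proof -
    have "0 < budget j" using large \<open>Z \<ge> 0\<close> \<open>\<epsilon> > 0\<close> by (smt (verit) divide_nonneg_pos)
    then have "Z / max 1 (budget j) \<le> Z / budget j"
      using \<open>Z \<ge> 0\<close> by (intro divide_left_mono) auto
    also have "\<dots> < \<epsilon>"
      using large \<open>0 < budget j\<close> \<open>\<epsilon> > 0\<close> by (simp add: field_simps)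
    finally show ?thesis .
  qed
  then show ?thesis
    unfolding Z_def[symmetric] by (rule eventually_mono[OF budget_eventually_ge])
qed

lemma orbit_approximates_target:
  assumes w: "\<And>n. n \<ge> 1 \<Longrightarrow> w n = sqrt (real (n + 1) / real n)"
    and "e > 0"
    and target: "summable (\<lambda>i. (rat_vec k i - y i)^2)" "(\<Sum>i. (rat_vec k i - y i)^2) < e^2 / 4"
    and j: "multiplicity 2 j = k" "vec_size k \<le> budget j"
      "(\<Sum>d. decay d) / max 1 (budget j) < e^2 / 4"
  shows "(bwshift w ^^ j^2) hc_vec \<in> l2 \<and> l2_norm ((bwshift w ^^ j^2) hc_vec - y) < e"
proof -
  have "block_vec j = rat_vec k" using j(1,2) by (simp add: block_vec_def)
  then have orbit: "(bwshift w ^^ j^2) hc_vec = (\<lambda>i. orbit_error j i + rat_vec k i)"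
    by (simp add: orbit_formula[OF w] orbit_error_def)
  have bound: "summable (\<lambda>i. (orbit_error j i)^2)
      \<and> (\<Sum>i. (orbit_error j i)^2) \<le> (\<Sum>d. decay d) / max 1 (budget j)"
    by (rule orbit_error_bound)
  have err: "summable (\<lambda>i. (orbit_error j i)^2)" "(\<Sum>i. (orbit_error j i)^2) < e^2 / 4"
    using bound j(3) by linarith+
  have "summable (\<lambda>i. (rat_vec k i)^2)"
    by (rule summable_finite[of "{..<length (rat_list k)}"]) (auto simp: rat_vec_def)
  then have "(bwshift w ^^ j^2) hc_vec \<in> l2"
    unfolding orbit l2_def using sq_summable_add(1)[OF err(1)] by simp
  moreover have "(bwshift w ^^ j^2) hc_vec - y = (\<lambda>i. orbit_error j i + (rat_vec k i - y i))"
    unfolding orbit by (simp add: fun_eq_iff)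
  ultimately show ?thesis
    using l2_norm_add_less[OF err(1) target(1) \<open>e > 0\<close> err(2) target(2)] by simp
qed

text \<open>The constructed vector is 2-frequently hypercyclic: given a ball around \<open>y\<close>, pick a
  nearby target \<open>k\<close>; the orbit enters the ball at the squares of all large \<open>j = 2^k (2r+1)\<close>.\<close>
lemma two_freq_hypercyclic:
  assumes w: "\<And>n. n \<ge> 1 \<Longrightarrow> w n = sqrt (real (n + 1) / real n)"
  shows "l2_q_freq_hypercyclic 2 (bwshift w)"
  unfolding l2_q_freq_hypercyclic_def
proof (intro bexI[of _ hc_vec] allI impI)
  fix U assume "l2_open U \<and> U \<noteq> {}"
  then obtain y e where "y \<in> l2" "e > 0"
    and ball: "\<And>z. z \<in> l2 \<Longrightarrow> l2_norm (z - y) < e \<Longrightarrow> z \<in> U"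
    unfolding l2_open_def by blast
  obtain k where k: "summable (\<lambda>i. (rat_vec k i - y i)^2)" "(\<Sum>i. (rat_vec k i - y i)^2) < e^2 / 4"
    using rat_vec_dense[OF \<open>y \<in> l2\<close>, of "e^2 / 4"] \<open>e > 0\<close> by auto
  have "\<forall>\<^sub>F j in sequentially.
      vec_size k \<le> budget j \<and> (\<Sum>d. decay d) / max 1 (budget j) < e^2 / 4"
    using \<open>e > 0\<close> by (intro eventually_conj budget_eventually_ge decay_sum_over_budget) simp
  then obtain j0 where j0: "\<And>j. j \<ge> j0 \<Longrightarrow>
      vec_size k \<le> budget j \<and> (\<Sum>d. decay d) / max 1 (budget j) < e^2 / 4"
    unfolding eventually_sequentially by blast
  txt \<open>All \<open>j = 2^k (2r+1)\<close> with \<open>r \<ge> j0\<close> give visits of the orbit to \<open>U\<close> at time \<open>j^2\<close>.\<close>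
  have "(2^(k+1) * r + 2^k)^2 \<in> {n. (bwshift w ^^ n) hc_vec \<in> U}" if "r \<ge> j0" for r
  proof -
    define j where "j = 2^(k+1) * r + 2^k"
    have "1 * r \<le> 2^(k+1) * r" by (intro mult_le_mono1) simp
    then have "j0 \<le> j" using that unfolding j_def by linarith
    moreover have "multiplicity 2 j = k" unfolding j_def by (rule multiplicity_odd_multiple)
    ultimately have "(bwshift w ^^ j^2) hc_vec \<in> l2 \<and> l2_norm ((bwshift w ^^ j^2) hc_vec - y) < e"
      using j0 by (intro orbit_approximates_target[OF w \<open>e > 0\<close> k]) auto
    then show ?thesis using ball by (simp add: j_def)
  qed
  then show "q_lower_dens 2 {n. (bwshift w ^^ n) hc_vec \<in> U} > 0"
    by (intro squares_of_progression_dens[where a = "2^(k+1)" and b = "2^k" and m = j0]) auto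
qed (rule hc_vec_l2)

theorem corollary4p2:
  fixes w :: "nat \<Rightarrow> real"
  assumes "\<And>n. n \<ge> 1 \<Longrightarrow> w n = sqrt (real (n + 1) / real n)"
  shows "l2_q_freq_hypercyclic 2 (bwshift w)
       \<and> \<not> l2_freq_hypercyclic (bwshift w)
       \<and> (\<forall>q::nat. q \<ge> 2 \<longrightarrow> l2_q_freq_hypercyclic q (bwshift w))"
proof (intro conjI allI impI)
  show two: "l2_q_freq_hypercyclic 2 (bwshift w)" by (rule two_freq_hypercyclic[OF assms])
  show "\<not> l2_freq_hypercyclic (bwshift w)" by (rule not_freq_hypercyclic[OF assms])
  fix q :: nat assume "q \<ge> 2"
  from two show "l2_q_freq_hypercyclic q (bwshift w)"
    unfolding l2_q_freq_hypercyclic_def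
    using q_lower_dens_mono[OF \<open>q \<ge> 2\<close> order_refl] by (meson less_le_trans)
qed

end
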